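(* Let $q\in(0,1)$ and consider an SC6V model on a skew domain $P-Q$. Let $v=(a,b)$ be a lattice vertex inside $P-Q$ with spectral parameter $z$, and set $v_{\nearrow}=(a+\frac12,b+\frac12)$, $v_{\searrow}=(a+\frac12,b-\frac12)$, $v_{\swarrow}=(a-\frac12,b-\frac12)$, $v_{\nwarrow}=(a-\frac12,b+\frac12)$. Then for any colors $c_1\le\dots\le c_r$ and any configuration $\Sigma^0$, $$\mathbb E\Big[q^{\sum_{t=1}^rh^{v_\nearrow}_{>c_t}(\Sigma)}\,\Big|\,\Sigma_{\swarrow v}=\Sigma^0_{\swarrow v}\Big]=\frac{q-q^rz}{q-z}q^{\sum_{t=1}^rh^{v_\searrow}_{>c_t}(\Sigma^0)}+\frac{qz-1}{q-z}\sum_{i=0}^{r-1}q^{i+\sum_{t\ne i+1}h^{v_\searrow}_{>c_t}(\Sigma^0)+h^{v_\swarrow}_{>c_{i+1}}(\Sigma^0)}+\frac{1-z}{q-z}\sum_{i=0}^{r-1}q^{i+\sum_{t\ne i+1}h^{v_\searrow}_{>c_t}(\Sigma^0)+h^{v_\nwarrow}_{>c_{i+1}}(\Sigma^0)},$$ i.e. in the $i$-th summand of the two sums the $(i+1)$-st point $v_\searrow$ is replaced by $v_\swarrow$, respectively $v_\nwarrow$.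
   Context: SC6V weights: colors $\{0,\dots,n\}$ ($0$ = no path); a vertex with incoming bottom $i$, left $j$, outgoing top $k$, right $l$ has weight $R_z(i,j;k,l)$ where, for $0\le i<j\le n$: $R_z(i,i;i,i)=1$, $R_z(j,i;j,i)=\frac{q(z-1)}{z-q}$, $R_z(j,i;i,j)=\frac{z(1-q)}{z-q}$, $R_z(i,j;i,j)=\frac{z-1}{z-q}$, $R_z(i,j;j,i)=\frac{1-q}{z-q}$, others $0$. Setting: lattice vertices $(a,b)$ ($a$ column, $b$ row), dual points in $(\mathbb{Z}+\frac12)^2$. $Q\le P$ are up-left paths (steps $(-1,0)$ or $(0,+1)$) with common endpoints, $Q$ weakly down-left of $P$; $P-Q$ is the set of lattice vertices between them with adjacent edges. Incoming edges (those crossing steps of $Q$) are colored by a weakly increasing coloring of the steps of $Q$ (in order from its first point $Q_0$). Each row and column has a rapidity; a vertex's spectral parameter is (row rapidity)/(column rapidity). The model is the (possibly complex-valued) probability measure on configurations (edge colorings consistent with the boundary) with weight the product of vertex weights. Height function: $h^{Q_0}_{>c}=0$; if the edge separating $(\alpha,\beta)$ and $(\alpha+1,\beta)$ has color $i$ then $h^{(\alpha+1,\beta)}_{>c}=h^{(\alpha,\beta)}_{>c}-\mathbb 1_{i>c}$; if the edge separating $(\alpha,\beta)$ and $(\alpha,\beta+1)$ has color $i$ then $h^{(\alpha,\beta+1)}_{>c}=h^{(\alpha,\beta)}_{>c}+\mathbb 1_{i>c}$. $\Sigma_{\swarrow v}$ denotes the restriction of a configuration $\Sigma$ to the skew domain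 $P_{\swarrow v}-Q$, where $P_{\swarrow v}$ is the maximal up-left path with $Q\le P_{\swarrow v}\le P$ such that $v$ is not inside $P_{\swarrow v}-Q$; equivalently, the restriction to the vertices of $P-Q$ lying weakly below or weakly to the left of $v$ other than those with column $\ge a$ and row $\ge b$, together with their edges. *)

theory Defs
  imports Complex_Main
begin

text \<open>Lattice vertices are pairs (a,b) of integers (column, row).
A dual point (x + 1/2, y + 1/2) is encoded by the integer pair (x,y).
Edges: Ve (a,b) is the vertical edge entering vertex (a,b) from below (its bottom
edge); He (a,b) is the horizontal edge entering vertex (a,b) from the left.
So the top edge of (a,b) is Ve (a,b+1) and its right edge is He (a+1,b).\<close>

datatype edge = Ve "int \<times> int" | He "int \<times> int"

type_synonym config = "edge \<Rightarrow> nat"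

definition up_left_path :: "(int \<times> int) list \<Rightarrow> bool" where
  "up_left_path R \<longleftrightarrow> R \<noteq> [] \<and>
     (\<forall>k. Suc k < length R \<longrightarrow>
        (R ! Suc k = (fst (R ! k) - 1, snd (R ! k)) \<or> R ! Suc k = (fst (R ! k), snd (R ! k) + 1)))"

definition path_le :: "(int \<times> int) list \<Rightarrow> (int \<times> int) list \<Rightarrow> bool" where
  "path_le Q P \<longleftrightarrow> up_left_path Q \<and> up_left_path P \<and> hd Q = hd P \<and> last Q = last P \<and>
     (\<forall>x\<in>set Q. \<exists>y\<in>set P. fst x \<le> fst y \<and> snd x \<le> snd y)"

text \<open>The lattice vertices of the skew domain P - Q: top-right corner weakly
below-left of P and bottom-left corner weakly above-right of Q.\<close>
definition skew_domain :: "(int \<times> int) list \<Rightarrow> (int \<times> int) list \<Rightarrow> (int \<times> int) set" where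
  "skew_domain Q P = {(a, b). (\<exists>p\<in>set P. a \<le> fst p \<and> b \<le> snd p) \<and>
                              (\<exists>p\<in>set Q. fst p \<le> a - 1 \<and> snd p \<le> b - 1)}"

definition cross_edge :: "int \<times> int \<Rightarrow> int \<times> int \<Rightarrow> edge" where
  "cross_edge x y = (if fst y = fst x - 1 then Ve (fst x, snd x + 1) else He (fst x + 1, snd x + 1))"

definition qedge :: "(int \<times> int) list \<Rightarrow> nat \<Rightarrow> edge" where
  "qedge Q k = cross_edge (Q ! k) (Q ! Suc k)"

definition adj_edges :: "(int \<times> int) set \<Rightarrow> edge set" where
  "adj_edges S = (\<Union>(a, b)\<in>S. {Ve (a, b), He (a, b), Ve (a, b + 1), He (a + 1, b)})"

definition boundary_edges :: "(int \<times> int) list \<Rightarrow> edge set" where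
  "boundary_edges Q = {qedge Q k | k. Suc k < length Q}"

definition dom_edges :: "(int \<times> int) list \<Rightarrow> (int \<times> int) list \<Rightarrow> edge set" where
  "dom_edges Q P = adj_edges (skew_domain Q P) \<union> boundary_edges Q"

text \<open>Configurations: colorings in {0..n} of the edges of the domain, consistent with
the boundary coloring col of the steps of Q (all other edges get the dummy value 0).\<close>
definition configs :: "nat \<Rightarrow> (int \<times> int) list \<Rightarrow> (int \<times> int) list \<Rightarrow> nat list \<Rightarrow> config set" where
  "configs n Q P col = {\<sigma>. (\<forall>e. e \<notin> dom_edges Q P \<longrightarrow> \<sigma> e = 0) \<and> (\<forall>e. \<sigma> e \<le> n) \<and>
       (\<forall>k. Suc k < length Q \<longrightarrow> \<sigma> (qedge Q k) = col ! k)}"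

text \<open>SC6V weight R_z(i,j;k,l): incoming bottom i, left j, outgoing top k, right l.\<close>
definition Rw :: "complex \<Rightarrow> complex \<Rightarrow> nat \<Rightarrow> nat \<Rightarrow> nat \<Rightarrow> nat \<Rightarrow> complex" where
  "Rw z q i j k l =
    (if i = j then (if k = i \<and> l = i then 1 else 0)
     else if j < i then
       (if k = i \<and> l = j then q * (z - 1) / (z - q)
        else if k = j \<and> l = i then z * (1 - q) / (z - q) else 0)
     else
       (if k = i \<and> l = j then (z - 1) / (z - q)
        else if k = j \<and> l = i then (1 - q) / (z - q) else 0))"

definition spec :: "(int \<Rightarrow> complex) \<Rightarrow> (int \<Rightarrow> complex) \<Rightarrow> int \<times> int \<Rightarrow> complex" where
  "spec u w v = u (snd v) / w (fst v)"

definition weight :: "real \<Rightarrow> (int \<Rightarrow> complex) \<Rightarrow> (int \<Rightarrow> complex) \<Rightarrow>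
     (int \<times> int) list \<Rightarrow> (int \<times> int) list \<Rightarrow> config \<Rightarrow> complex" where
  "weight q u w Q P \<sigma> =
     (\<Prod>v\<in>skew_domain Q P. Rw (spec u w v) (of_real q)
        (\<sigma> (Ve v)) (\<sigma> (He v)) (\<sigma> (Ve (fst v, snd v + 1))) (\<sigma> (He (fst v + 1, snd v))))"

text \<open>Height function h^{(x,y)}_{>c}, computed along the canonical path that follows Q
from Q_0 to its first point in column x and then goes straight up to (x,y).
Along Q each step crossing an edge of color > c raises the height by one; moving up
across a horizontal edge of color > c raises it by one.\<close>
definition height :: "(int \<times> int) list \<Rightarrow> nat list \<Rightarrow> config \<Rightarrow> nat \<Rightarrow> int \<times> int \<Rightarrow> nat" where
  "height Q col \<sigma> c d =
     (let k = (LEAST k. k < length Q \<and> fst (Q ! k) = fst d) in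
      card {j. j < k \<and> c < col ! j} +
      card {y. snd (Q ! k) \<le> y \<and> y < snd d \<and> c < \<sigma> (He (fst d + 1, y + 1))})"

text \<open>Vertices of the domain P_{\<swarrow>v} - Q: those of P - Q outside the closed
north-east quadrant of v.\<close>
definition sw_domain :: "(int \<times> int) list \<Rightarrow> (int \<times> int) list \<Rightarrow> int \<times> int \<Rightarrow> (int \<times> int) set" where
  "sw_domain Q P v = skew_domain Q P - {v'. fst v \<le> fst v' \<and> snd v \<le> snd v'}"

text \<open>\<Sigma>_{\<swarrow>v} = \<Sigma>0_{\<swarrow>v}: agreement on all edges of the subdomain (and its boundary).\<close>
definition agree_sw :: "(int \<times> int) list \<Rightarrow> (int \<times> int) list \<Rightarrow> int \<times> int \<Rightarrow> config \<Rightarrow> config \<Rightarrow> bool" where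
  "agree_sw Q P v \<sigma> \<sigma>0 \<longleftrightarrow> (\<forall>e \<in> adj_edges (sw_domain Q P v) \<union> boundary_edges Q. \<sigma> e = \<sigma>0 e)"

definition cond_exp :: "(config \<Rightarrow> complex) \<Rightarrow> config set \<Rightarrow> (config \<Rightarrow> complex) \<Rightarrow> complex" where
  "cond_exp W S X = (\<Sum>\<sigma>\<in>S. W \<sigma> * X \<sigma>) / (\<Sum>\<sigma>\<in>S. W \<sigma>)"

end

theory Submission
  imports Defs
begin

(* Conditioning on the configuration south-west of v fixes every edge except the outgoing edges
   of the vertices of P - Q in the closed north-east quadrant of v.  Sum the product of their
   weights over these colours, removing the vertices one at a time in decreasing order of a + b:
   the incoming colours of the vertex removed are fixed and its weights are stochastic,
   sum_{k,l} R_z(i,j;k,l) = 1.  What remains is v itself, whose outgoing colours the observable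
   sees through h^{v_ne}_{>c} = h^{v_se}_{>c} + [l > c], l the colour leaving v to the right.
   So the conditional expectation is sum_{k,l} R_z(i,j;k,l) g(l), i and j the colours entering v.
   Likewise h^{v_sw} = h^{v_se} + [i > c] (by arrow conservation along the column below v, in any
   configuration of nonzero weight) and h^{v_nw} = h^{v_sw} + [j > c].  For sorted c_t the
   indicators [x > c_t] select an initial segment of the indices t, so in each of the three cases
   of R_z the right-hand side is a combination of geometric sums in q. *)

section \<open>Up-left paths\<close>

lemma up_left_path_step:
  assumes "up_left_path R" "Suc k < length R"
  shows "R ! Suc k = (fst (R ! k) - 1, snd (R ! k)) \<or> R ! Suc k = (fst (R ! k), snd (R ! k) + 1)"
  using assms unfolding up_left_path_def by blast

lemma up_left_path_nth_mono:
  assumes "up_left_path R" "i \<le> j" "j < length R"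
  shows "fst (R ! j) \<le> fst (R ! i) \<and> snd (R ! i) \<le> snd (R ! j)"
  using assms(2,3)
proof (induction j)
  case (Suc j)
  show ?case
  proof (cases "i = Suc j")
    case False
    then have "fst (R ! j) \<le> fst (R ! i) \<and> snd (R ! i) \<le> snd (R ! j)"
      using Suc by simp
    with up_left_path_step[OF assms(1) Suc.prems(2)] show ?thesis by auto
  qed simp
qed simp

lemma up_left_path_fst_less_imp_less:
  assumes "up_left_path R" "i < length R" "j < length R" "fst (R ! j) < fst (R ! i)"
  shows "i < j"
  using up_left_path_nth_mono[OF assms(1), of j i] assms by force

lemma up_left_path_snd_less_imp_less:
  assumes "up_left_path R" "i < length R" "j < length R" "snd (R ! i) < snd (R ! j)"
  shows "i < j"
  using up_left_path_nth_mono[OF assms(1), of j i] assms by force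

lemma up_left_path_crosses_column:
  assumes "up_left_path R" "j < length R" "x \<le> fst (R ! 0)" "fst (R ! j) < x"
  obtains m where "Suc m \<le> j" "fst (R ! m) = x" "R ! Suc m = (x - 1, snd (R ! m))"
proof -
  have "\<exists>m. Suc m \<le> j \<and> fst (R ! m) = x \<and> R ! Suc m = (x - 1, snd (R ! m))"
    using assms(2,4)
  proof (induction j)
    case (Suc j)
    show ?case
    proof (cases "fst (R ! j) < x")
      case True
      with Suc.IH Suc.prems(1) show ?thesis by (meson Suc_lessD le_SucI)
    next
      case False
      with up_left_path_step[OF assms(1) Suc.prems(1)] Suc.prems(2) show ?thesis by auto
    qed
  qed (use assms(3) in simp)
  then show ?thesis using that by blast
qed

lemma up_left_path_crosses_row:
  assumes "up_left_path R" "j < length R" "snd (R ! 0) < y" "y \<le> snd (R ! j)"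
  obtains m where "Suc m \<le> j" "snd (R ! m) = y - 1" "R ! Suc m = (fst (R ! m), y)"
proof -
  have "\<exists>m. Suc m \<le> j \<and> snd (R ! m) = y - 1 \<and> R ! Suc m = (fst (R ! m), y)"
    using assms(2,4)
  proof (induction j)
    case (Suc j)
    show ?case
    proof (cases "y \<le> snd (R ! j)")
      case True
      with Suc.IH Suc.prems(1) show ?thesis by (meson Suc_lessD le_SucI)
    next
      case False
      with up_left_path_step[OF assms(1) Suc.prems(1)] Suc.prems(2) show ?thesis by auto
    qed
  qed (use assms(3) in simp)
  then show ?thesis using that by blast
qed

lemma up_left_path_bounds:
  assumes "up_left_path R" "p \<in> set R"
  shows "fst p \<le> fst (hd R) \<and> snd p \<le> snd (last R)"
proof -
  obtain i where i: "i < length R" "p = R ! i"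
    using assms(2) by (metis in_set_conv_nth)
  have "R \<noteq> []" using assms(1) unfolding up_left_path_def by simp
  then show ?thesis
    using up_left_path_nth_mono[OF assms(1), of 0 i] up_left_path_nth_mono[OF assms(1), of i "length R - 1"] i
    by (auto simp: hd_conv_nth last_conv_nth)
qed

lemma finite_skew_domain: "finite (skew_domain Q P)"
proof (rule finite_subset)
  show "skew_domain Q P \<subseteq> (\<Union>p\<in>set P. \<Union>p'\<in>set Q. {fst p' + 1..fst p} \<times> {snd p' + 1..snd p})"
    unfolding skew_domain_def by force
qed auto

section \<open>Stochasticity of the vertex weights\<close>

lemma sum_Rw_mult:
  assumes "i \<le> n" "j \<le> n"
  shows "(\<Sum>k\<le>n. \<Sum>l\<le>n. Rw z q i j k l * g k l) =
    (if i = j then g i i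
     else if j < i then q * (z - 1) / (z - q) * g i j + z * (1 - q) / (z - q) * g j i
     else (z - 1) / (z - q) * g i j + (1 - q) / (z - q) * g j i)"
proof -
  have "(\<Sum>k\<le>n. \<Sum>l\<le>n. Rw z q i j k l * g k l) =
     (\<Sum>k\<le>n. \<Sum>l\<le>n. (if l = j then (if k = i then Rw z q i j i j * g i j else 0) else 0)
        + (if l = i then (if k = j then (if i = j then 0 else Rw z q i j j i * g j i) else 0) else 0))"
    by (intro sum.cong refl) (auto simp: Rw_def)
  also have "\<dots> = Rw z q i j i j * g i j + (if i = j then 0 else Rw z q i j j i * g j i)"
    using assms by (simp add: sum.distrib)
  finally show ?thesis by (simp add: Rw_def)
qed

lemma sum_Rw:
  assumes "i \<le> n" "j \<le> n" "z \<noteq> q"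
  shows "(\<Sum>k\<le>n. \<Sum>l\<le>n. Rw z q i j k l) = 1"
  using sum_Rw_mult[OF assms(1,2), of z q "\<lambda>_ _. 1"] assms(3)
  by (simp add: add_divide_distrib[symmetric] algebra_simps)

lemma Rw_nonzero_conserves:
  "Rw z q i j k l \<noteq> 0 \<Longrightarrow> of_bool (c < i) + of_bool (c < j) = (of_bool (c < k) + of_bool (c < l) :: nat)"
  unfolding Rw_def by (auto split: if_splits)

section \<open>Summing out the outgoing edges of a set of vertices\<close>

definition recolorings :: "config \<Rightarrow> nat \<Rightarrow> edge set \<Rightarrow> config set" where
  "recolorings \<sigma>0 n F = {\<sigma>. (\<forall>e. e \<notin> F \<longrightarrow> \<sigma> e = \<sigma>0 e) \<and> (\<forall>e\<in>F. \<sigma> e \<le> n)}"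

lemma recolorings_empty [simp]: "recolorings \<sigma>0 n {} = {\<sigma>0}"
  unfolding recolorings_def by auto

lemma recolorings_le: "\<forall>e. \<sigma>0 e \<le> n \<Longrightarrow> \<sigma> \<in> recolorings \<sigma>0 n F \<Longrightarrow> \<sigma> e \<le> n"
  unfolding recolorings_def by (cases "e \<in> F") auto

lemma sum_recolorings_insert:
  assumes "e \<notin> F"
  shows "(\<Sum>\<sigma>\<in>recolorings \<sigma>0 n (insert e F). f \<sigma>) = (\<Sum>\<tau>\<in>recolorings \<sigma>0 n F. \<Sum>k\<le>n. f (\<tau>(e := k)))"
proof -
  have "bij_betw (\<lambda>(\<tau>, k). \<tau>(e := k)) (recolorings \<sigma>0 n F \<times> {..n}) (recolorings \<sigma>0 n (insert e F))"
    by (rule bij_betw_byWitness[where f' = "\<lambda>\<sigma>. (\<sigma>(e := \<sigma>0 e), \<sigma> e)"])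
       (use assms in \<open>auto simp: recolorings_def fun_eq_iff\<close>)
  then show ?thesis
    by (simp add: sum.reindex_bij_betw[symmetric] sum.cartesian_product case_prod_unfold)
qed

definition top_edge :: "int \<times> int \<Rightarrow> edge" where
  "top_edge v = Ve (fst v, snd v + 1)"

definition right_edge :: "int \<times> int \<Rightarrow> edge" where
  "right_edge v = He (fst v + 1, snd v)"

definition out_edges :: "(int \<times> int) set \<Rightarrow> edge set" where
  "out_edges N = top_edge ` N \<union> right_edge ` N"

definition vertex_weight :: "real \<Rightarrow> (int \<Rightarrow> complex) \<Rightarrow> (int \<Rightarrow> complex) \<Rightarrow> config \<Rightarrow> int \<times> int \<Rightarrow> complex" where
  "vertex_weight q u w \<sigma> v =
     Rw (spec u w v) (of_real q) (\<sigma> (Ve v)) (\<sigma> (He v)) (\<sigma> (top_edge v)) (\<sigma> (right_edge v))"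

lemma weight_eq_prod_vertex_weight:
  "weight q u w Q P \<sigma> = (\<Prod>v\<in>skew_domain Q P. vertex_weight q u w \<sigma> v)"
  unfolding weight_def vertex_weight_def top_edge_def right_edge_def ..

lemma cond_exp_cong: "(\<And>\<sigma>. \<sigma> \<in> S \<Longrightarrow> X \<sigma> = Y \<sigma>) \<Longrightarrow> cond_exp W S X = cond_exp W S Y"
  unfolding cond_exp_def by (metis (no_types, lifting) sum.cong)

lemma edge_eq_iff [simp]:
  "top_edge x = top_edge y \<longleftrightarrow> x = y" "right_edge x = right_edge y \<longleftrightarrow> x = y"
  "top_edge x \<noteq> right_edge y" "right_edge x \<noteq> top_edge y"
  "Ve x = top_edge y \<longleftrightarrow> x = (fst y, snd y + 1)" "He x = right_edge y \<longleftrightarrow> x = (fst y + 1, snd y)"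
  "Ve x \<noteq> right_edge y" "He x \<noteq> top_edge y"
  by (auto simp: top_edge_def right_edge_def prod_eq_iff)

lemma sum_recolorings_out_edges_insert:
  assumes "m \<notin> N"
  shows "(\<Sum>\<sigma>\<in>recolorings \<sigma>0 n (out_edges (insert m N)). f \<sigma>) =
    (\<Sum>\<tau>\<in>recolorings \<sigma>0 n (out_edges N). \<Sum>k\<le>n. \<Sum>l\<le>n. f (\<tau>(top_edge m := k, right_edge m := l)))"
proof -
  have "out_edges (insert m N) = insert (top_edge m) (insert (right_edge m) (out_edges N))"
    unfolding out_edges_def by auto
  moreover have "top_edge m \<notin> insert (right_edge m) (out_edges N)" "right_edge m \<notin> out_edges N"
    using assms unfolding out_edges_def by auto
  ultimately have "(\<Sum>\<sigma>\<in>recolorings \<sigma>0 n (out_edges (insert m N)). f \<sigma>) =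
    (\<Sum>\<tau>\<in>recolorings \<sigma>0 n (out_edges N). \<Sum>l\<le>n. \<Sum>k\<le>n. f (\<tau>(right_edge m := l, top_edge m := k)))"
    by (simp add: sum_recolorings_insert)
  also have "\<dots> = (\<Sum>\<tau>\<in>recolorings \<sigma>0 n (out_edges N). \<Sum>k\<le>n. \<Sum>l\<le>n. f (\<tau>(top_edge m := k, right_edge m := l)))"
    by (rule sum.cong[OF refl], subst sum.swap) (simp add: fun_upd_twist)
  finally show ?thesis .
qed

lemma vertex_weight_upd_out_edges:
  "vertex_weight q u w (\<tau>(top_edge m := k, right_edge m := l)) m =
     Rw (spec u w m) (of_real q) (\<tau> (Ve m)) (\<tau> (He m)) k l"
  by (simp add: vertex_weight_def prod_eq_iff)

lemma sum_recolorings_remove_top_vertex: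
  assumes "finite N" "m \<notin> N" "v \<in> N" "\<forall>x\<in>N. fst x + snd x \<le> fst m + snd m"
    "spec u w m \<noteq> of_real q" "\<forall>e. \<sigma>0 e \<le> n"
  shows "(\<Sum>\<sigma>\<in>recolorings \<sigma>0 n (out_edges (insert m N)).
            (\<Prod>x\<in>insert m N. vertex_weight q u w \<sigma> x) * g (\<sigma> (top_edge v)) (\<sigma> (right_edge v))) =
         (\<Sum>\<sigma>\<in>recolorings \<sigma>0 n (out_edges N).
            (\<Prod>x\<in>N. vertex_weight q u w \<sigma> x) * g (\<sigma> (top_edge v)) (\<sigma> (right_edge v)))"
proof -
  have weight_other: "vertex_weight q u w (\<tau>(top_edge m := k, right_edge m := l)) x = vertex_weight q u w \<tau> x"
    if "x \<in> N" for \<tau> k l x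
  proof -
    \<comment> \<open>by maximality of m, the outgoing edges of m are not incoming edges of x\<close>
    have "Ve x \<noteq> top_edge m" "He x \<noteq> right_edge m" "x \<noteq> m"
      using that assms(2,4) by auto
    then show ?thesis
      by (simp add: vertex_weight_def)
  qed
  have "v \<noteq> m"
    using assms(2,3) by auto
  then have summand: "(\<Prod>x\<in>insert m N. vertex_weight q u w (\<tau>(top_edge m := k, right_edge m := l)) x) *
        g ((\<tau>(top_edge m := k, right_edge m := l)) (top_edge v)) ((\<tau>(top_edge m := k, right_edge m := l)) (right_edge v)) =
      Rw (spec u w m) (of_real q) (\<tau> (Ve m)) (\<tau> (He m)) k l *
        ((\<Prod>x\<in>N. vertex_weight q u w \<tau> x) * g (\<tau> (top_edge v)) (\<tau> (right_edge v)))" for \<tau> k l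
    using assms(1,2) weight_other by (simp add: vertex_weight_upd_out_edges)
  have "(\<Sum>\<sigma>\<in>recolorings \<sigma>0 n (out_edges (insert m N)).
          (\<Prod>x\<in>insert m N. vertex_weight q u w \<sigma> x) * g (\<sigma> (top_edge v)) (\<sigma> (right_edge v))) =
      (\<Sum>\<tau>\<in>recolorings \<sigma>0 n (out_edges N). (\<Sum>k\<le>n. \<Sum>l\<le>n. Rw (spec u w m) (of_real q) (\<tau> (Ve m)) (\<tau> (He m)) k l) *
         ((\<Prod>x\<in>N. vertex_weight q u w \<tau> x) * g (\<tau> (top_edge v)) (\<tau> (right_edge v))))"
    unfolding sum_recolorings_out_edges_insert[OF assms(2)] by (simp only: summand sum_distrib_right)
  also have "\<dots> = (\<Sum>\<tau>\<in>recolorings \<sigma>0 n (out_edges N).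
        (\<Prod>x\<in>N. vertex_weight q u w \<tau> x) * g (\<tau> (top_edge v)) (\<tau> (right_edge v)))"
    using sum_Rw recolorings_le[OF assms(6)] assms(5) by (intro sum.cong) auto
  finally show ?thesis .
qed

lemma sum_recolorings_prod_vertex_weight:
  assumes "finite N" "v \<in> N" "\<forall>x\<in>N - {v}. fst v + snd v < fst x + snd x"
    "\<forall>x\<in>N. spec u w x \<noteq> of_real q" "\<forall>e. \<sigma>0 e \<le> n"
  shows "(\<Sum>\<sigma>\<in>recolorings \<sigma>0 n (out_edges N).
            (\<Prod>x\<in>N. vertex_weight q u w \<sigma> x) * g (\<sigma> (top_edge v)) (\<sigma> (right_edge v))) =
         (\<Sum>k\<le>n. \<Sum>l\<le>n. Rw (spec u w v) (of_real q) (\<sigma>0 (Ve v)) (\<sigma>0 (He v)) k l * g k l)"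
  using assms(1-4)
proof (induction N rule: finite_psubset_induct)
  case (psubset N)
  let ?d = "\<lambda>x::int \<times> int. fst x + snd x"
  have "Max (?d ` N) \<in> ?d ` N"
    using psubset.hyps psubset.prems(1) by (intro Max_in) auto
  then obtain m where m: "m \<in> N" "?d m = Max (?d ` N)"
    by auto
  have m_max: "\<forall>x\<in>N. ?d x \<le> ?d m"
    using m(2) psubset.hyps by simp
  define N' where "N' = N - {m}"
  have N: "N = insert m N'" "m \<notin> N'" "finite N'"
    using m psubset.hyps unfolding N'_def by auto
  show ?case
  proof (cases "m = v")
    case True
    have "\<not> ?d v < ?d x" if "x \<in> N" for x
      using m_max True that by (simp add: not_less)
    then have "N' = {}"
      using psubset.prems(2) True unfolding N'_def by blast
    then show ?thesis
      unfolding N(1) True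
      by (subst sum_recolorings_out_edges_insert) (simp_all add: vertex_weight_upd_out_edges out_edges_def)
  next
    case False
    then have "v \<in> N'" "N' \<subset> N"
      using psubset.prems(1) m unfolding N'_def by auto
    have "\<forall>x\<in>N' - {v}. ?d v < ?d x" "\<forall>x\<in>N'. spec u w x \<noteq> of_real q"
      using psubset.prems(2,3) unfolding N'_def by auto
    note IH = psubset.IH[OF \<open>N' \<subset> N\<close> \<open>v \<in> N'\<close> this]
    have "\<forall>x\<in>N'. ?d x \<le> ?d m" "spec u w m \<noteq> of_real q"
      using m_max psubset.prems(3) m(1) unfolding N'_def by auto
    then show ?thesis
      using sum_recolorings_remove_top_vertex[OF N(3,2) \<open>v \<in> N'\<close> _ _ assms(5), where g = g] IH
      unfolding N(1)[symmetric] by simp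
  qed
qed

section \<open>The height function along a column\<close>

definition height_from :: "(int \<times> int) list \<Rightarrow> nat list \<Rightarrow> config \<Rightarrow> nat \<Rightarrow> nat \<Rightarrow> int \<Rightarrow> int \<Rightarrow> nat" where
  "height_from Q col \<sigma> c m x y = card {j. j < m \<and> c < col ! j} +
     card {y'. snd (Q ! m) \<le> y' \<and> y' < y \<and> c < \<sigma> (He (x + 1, y' + 1))}"

lemma height_eq_height_from:
  "height Q col \<sigma> c d =
     height_from Q col \<sigma> c (LEAST k. k < length Q \<and> fst (Q ! k) = fst d) (fst d) (snd d)"
  by (simp add: height_def height_from_def Let_def)

lemma card_int_interval_filter_extend:
  assumes "s \<le> y"
  shows "card {y'::int. s \<le> y' \<and> y' < y + 1 \<and> p y'} = card {y'. s \<le> y' \<and> y' < y \<and> p y'} + of_bool (p y)"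
proof -
  let ?S = "{y'. s \<le> y' \<and> y' < y \<and> p y'}"
  have "{y'. s \<le> y' \<and> y' < y + 1 \<and> p y'} = (if p y then insert y ?S else ?S)"
    using assms by (auto simp: order_le_less)
  moreover have "finite ?S"
    by (rule finite_subset[of _ "{s..<y}"]) auto
  ultimately show ?thesis
    by simp
qed

lemma card_int_interval_filter_shrink:
  "card {y'::int. s \<le> y' \<and> y' < y \<and> p y'} = card {y'. s + 1 \<le> y' \<and> y' < y \<and> p y'} + of_bool (p s \<and> s < y)"
proof -
  let ?S = "{y'. s + 1 \<le> y' \<and> y' < y \<and> p y'}"
  have "{y'. s \<le> y' \<and> y' < y \<and> p y'} = (if p s \<and> s < y then insert s ?S else ?S)"
    by (auto simp: order_le_less)
  moreover have "finite ?S"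
    by (rule finite_subset[of _ "{s + 1..<y}"]) auto
  ultimately show ?thesis
    by simp
qed

lemma card_nat_filter_less_Suc:
  "card {j::nat. j < Suc m \<and> p j} = card {j. j < m \<and> p j} + of_bool (p m)"
proof -
  have "{j. j < Suc m \<and> p j} = (if p m then insert m {j. j < m \<and> p j} else {j. j < m \<and> p j})"
    by (auto simp: less_Suc_eq)
  then show ?thesis
    by simp
qed

lemma height_from_up:
  assumes "snd (Q ! m) \<le> y"
  shows "height_from Q col \<sigma> c m x (y + 1) = height_from Q col \<sigma> c m x y + of_bool (c < \<sigma> (He (x + 1, y + 1)))"
  using card_int_interval_filter_extend[OF assms, of "\<lambda>y'. c < \<sigma> (He (x + 1, y' + 1))"]
  unfolding height_from_def by simp

lemma height_from_cong:
  assumes "\<forall>y'<y. \<sigma> (He (x + 1, y' + 1)) = \<sigma>' (He (x + 1, y' + 1))"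
  shows "height_from Q col \<sigma> c m x y = height_from Q col \<sigma>' c m x y"
proof -
  have "{y'. snd (Q ! m) \<le> y' \<and> y' < y \<and> c < \<sigma> (He (x + 1, y' + 1))} =
        {y'. snd (Q ! m) \<le> y' \<and> y' < y \<and> c < \<sigma>' (He (x + 1, y' + 1))}"
    using assms by auto
  then show ?thesis unfolding height_from_def by simp
qed

lemma height_from_Suc_vertical:
  assumes "Q ! Suc m = (x, snd (Q ! m) + 1)" "\<sigma> (He (x + 1, snd (Q ! m) + 1)) = col ! m"
    "snd (Q ! m) + 1 \<le> y"
  shows "height_from Q col \<sigma> c (Suc m) x y = height_from Q col \<sigma> c m x y"
  using card_int_interval_filter_shrink[of "snd (Q ! m)" y "\<lambda>y'. c < \<sigma> (He (x + 1, y' + 1))"] assms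
  unfolding height_from_def card_nat_filter_less_Suc by simp

lemma height_from_vertical_run:
  assumes "k \<le> m" "snd (Q ! m) \<le> y"
    "\<forall>i. k \<le> i \<and> i < m \<longrightarrow> Q ! Suc i = (x, snd (Q ! i) + 1) \<and> \<sigma> (He (x + 1, snd (Q ! i) + 1)) = col ! i"
  shows "height_from Q col \<sigma> c k x y = height_from Q col \<sigma> c m x y"
  using assms
proof (induction m rule: dec_induct)
  case (step m)
  then have "Q ! Suc m = (x, snd (Q ! m) + 1)" "\<sigma> (He (x + 1, snd (Q ! m) + 1)) = col ! m"
    by auto
  with step show ?case
    using height_from_Suc_vertical[of Q m x \<sigma> col y c] by simp
qed simp

lemma height_from_Suc_horizontal:
  assumes "Q ! m = (x, s)" "Q ! Suc m = (x - 1, s)" "\<sigma> (Ve (x, s + 1)) = col ! m" "s \<le> y"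
    "\<forall>y'. s + 1 \<le> y' \<and> y' \<le> y \<longrightarrow>
       of_bool (c < \<sigma> (Ve (x, y'))) + of_bool (c < \<sigma> (He (x, y'))) =
       (of_bool (c < \<sigma> (Ve (x, y' + 1))) + of_bool (c < \<sigma> (He (x + 1, y'))) :: nat)"
  shows "height_from Q col \<sigma> c (Suc m) (x - 1) y = height_from Q col \<sigma> c m x y + of_bool (c < \<sigma> (Ve (x, y + 1)))"
  using assms(4,5)
proof (induction y rule: int_ge_induct)
  case base
  have empty: "{y'::int. s \<le> y' \<and> y' < s \<and> p y'} = {}" for p
    by auto
  show ?case
    using assms(1-3) unfolding height_from_def card_nat_filter_less_Suc by (simp add: empty)
next
  case (step y)
  then show ?case
    using height_from_up[of Q "Suc m" y col \<sigma> c "x - 1"] height_from_up[of Q m y col \<sigma> c x] assms(1,2)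
    by simp
qed

section \<open>Geometric sums over sorted colours\<close>

lemma sorted_nth_less_iff:
  assumes "sorted cs" "t < length cs"
  shows "cs ! t < l \<longleftrightarrow> t < length (takeWhile (\<lambda>c. c < l) cs)"
proof
  assume less: "cs ! t < l"
  show "t < length (takeWhile (\<lambda>c. c < l) cs)"
  proof (rule ccontr)
    let ?A = "length (takeWhile (\<lambda>c. c < l) cs)"
    assume "\<not> t < ?A"
    then have "cs ! ?A \<le> cs ! t" "?A < length cs"
      using assms by (auto simp: sorted_iff_nth_mono)
    moreover have "\<not> cs ! ?A < l" if "?A < length cs"
      using nth_length_takeWhile[OF that] .
    ultimately show False
      using less by simp
  qed
qed (metis nth_mem set_takeWhileD takeWhile_nth)

lemma length_takeWhile_less_mono:
  fixes l l' :: "'a::order"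
  shows "l \<le> l' \<Longrightarrow> length (takeWhile (\<lambda>c. c < l) cs) \<le> length (takeWhile (\<lambda>c. c < l') cs)"
  by (induction cs) (auto intro: less_le_trans)

lemma lessThan_inter_less: "(A::nat) \<le> r \<Longrightarrow> {..<r} \<inter> {t. t < A} = {..<A}"
  by (auto intro: less_le_trans)

lemma sum_of_bool_sorted_nth_less:
  assumes "sorted cs"
  shows "(\<Sum>t<length cs. of_bool (cs ! t < l) :: nat) = length (takeWhile (\<lambda>c. c < l) cs)"
proof -
  have "(\<Sum>t<length cs. of_bool (cs ! t < l) :: nat) =
      (\<Sum>t<length cs. of_bool (t < length (takeWhile (\<lambda>c. c < l) cs)))"
    using sorted_nth_less_iff[OF assms] by (intro sum.cong) auto
  also have "\<dots> = length (takeWhile (\<lambda>c. c < l) cs)"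
    by (simp add: lessThan_inter_less length_takeWhile_le)
  finally show ?thesis .
qed

lemma sum_power_of_bool_less:
  fixes x :: "'a::comm_ring_1"
  assumes "A \<le> r"
  shows "(\<Sum>t<r. x ^ (t + of_bool (t < A))) = (\<Sum>t<r. x ^ t) + (x ^ A - 1)"
proof -
  have "(\<Sum>t<r. x ^ (t + of_bool (t < A))) = (\<Sum>t<r. x ^ t + of_bool (t < A) * ((x - 1) * x ^ t))"
    by (intro sum.cong) (auto simp: algebra_simps)
  also have "\<dots> = (\<Sum>t<r. x ^ t) + (\<Sum>t<A. (x - 1) * x ^ t)"
    using assms by (simp add: sum.distrib lessThan_inter_less)
  finally show ?thesis
    by (simp add: power_diff_1_eq sum_distrib_left)
qed

lemma sum_power_of_bool_less2:
  fixes x :: "'a::comm_ring_1"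
  assumes "B \<le> A" "A \<le> r"
  shows "(\<Sum>t<r. x ^ (t + of_bool (t < A) + of_bool (t < B))) = (\<Sum>t<r. x ^ t) + (x ^ A - 1) + x * (x ^ B - 1)"
proof -
  have "(\<Sum>t<r. x ^ (t + of_bool (t < A) + of_bool (t < B))) =
     (\<Sum>t<r. x ^ t + of_bool (t < A) * ((x - 1) * x ^ t) + of_bool (t < B) * (x * ((x - 1) * x ^ t)))"
    using assms by (intro sum.cong) (auto simp: algebra_simps power2_eq_square)
  also have "\<dots> = (\<Sum>t<r. x ^ t) + (\<Sum>t<A. (x - 1) * x ^ t) + (\<Sum>t<B. x * ((x - 1) * x ^ t))"
    using assms by (simp add: sum.distrib lessThan_inter_less)
  finally show ?thesis
    by (simp add: power_diff_1_eq sum_distrib_left)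
qed

text \<open>The sum U of the geometric series enters only through (1 - x) U = 1 - x^r, so the identities are
  polynomial once the denominator x - z is inverted.\<close>

lemma Rw_geometric_identities:
  fixes x z U pA pB pr :: complex
  assumes "x \<noteq> z" "(1 - x) * U = 1 - pr"
  defines "rhs pA' pB' \<equiv> (x - pr * z) / (x - z) + (x * z - 1) / (x - z) * (U + (pA - 1))
      + (1 - z) / (x - z) * (U + (pA' - 1) + x * (pB' - 1))"
  shows "pA = rhs pA pA"
    and "x * (z - 1) / (z - x) * pB + z * (1 - x) / (z - x) * pA = rhs pA pB"
    and "(z - 1) / (z - x) * pB + (1 - x) / (z - x) * pA = rhs pB pA"
proof -
  define d where "d = inverse (x - z)"
  have d: "d * (x - z) = 1"
    unfolding d_def using assms(1) by simp
  have div1: "a / (x - z) = a * d" for a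
    unfolding d_def by (simp add: divide_inverse)
  have div2: "a / (z - x) = - (a * d)" for a
    unfolding d_def by (metis divide_inverse inverse_minus_eq minus_diff_eq mult_minus_right)
  show "pA = rhs pA pA"
    unfolding rhs_def div1 div2 using d assms(2) by algebra
  show "x * (z - 1) / (z - x) * pB + z * (1 - x) / (z - x) * pA = rhs pA pB"
    unfolding rhs_def div1 div2 using d assms(2) by algebra
  show "(z - 1) / (z - x) * pB + (1 - x) / (z - x) * pA = rhs pB pA"
    unfolding rhs_def div1 div2 using d assms(2) by algebra
qed

lemma sum_Rw_power_mono:
  fixes x z :: complex and T :: "nat \<Rightarrow> nat"
  assumes "x \<noteq> z" "mono T" "T i \<le> r" "T j \<le> r" "i \<le> n" "j \<le> n"
  shows "(\<Sum>k\<le>n. \<Sum>l\<le>n. Rw z x i j k l * x ^ T l) =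
    (x - x ^ r * z) / (x - z)
    + (x * z - 1) / (x - z) * (\<Sum>t<r. x ^ (t + of_bool (t < T i)))
    + (1 - z) / (x - z) * (\<Sum>t<r. x ^ (t + of_bool (t < T i) + of_bool (t < T j)))"
proof -
  define U where "U = (\<Sum>t<r. x ^ t)"
  have U: "(1 - x) * U = 1 - x ^ r"
    unfolding U_def by (simp add: one_diff_power_eq)
  note identities = Rw_geometric_identities[OF assms(1) U, where pA = "x ^ T i"]
  have sum1: "(\<Sum>t<r. x ^ (t + of_bool (t < T i))) = U + (x ^ T i - 1)"
    unfolding U_def using assms(3) by (rule sum_power_of_bool_less)
  show ?thesis
  proof (cases rule: linorder_cases[of i j])
    case less
    then have "T i \<le> T j"
      using assms(2) by (simp add: mono_def)
    then have "(\<Sum>t<r. x ^ (t + of_bool (t < T i) + of_bool (t < T j))) = U + (x ^ T j - 1) + x * (x ^ T i - 1)"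
      using sum_power_of_bool_less2[OF _ assms(4), of "T i" x] unfolding U_def by (simp add: add_ac)
    then show ?thesis
      unfolding sum_Rw_mult[OF assms(5,6)] sum1 using less identities(3)[where pB = "x ^ T j"] by simp
  next
    case equal
    then show ?thesis
      unfolding sum_Rw_mult[OF assms(5,6)] sum1
      using identities(1) sum_power_of_bool_less2[OF order.refl assms(3), of x] unfolding U_def by simp
  next
    case greater
    then have "T j \<le> T i"
      using assms(2) by (simp add: mono_def)
    then show ?thesis
      unfolding sum_Rw_mult[OF assms(5,6)] sum1
      using greater identities(2)[where pB = "x ^ T j"] sum_power_of_bool_less2[OF _ assms(3), of "T j" x]
      unfolding U_def by simp
  qed
qed

lemma sum_Rw_power_heights:
  fixes x z :: complex and h :: "nat \<Rightarrow> nat" and cs :: "nat list"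
  defines "r \<equiv> length cs"
  assumes "x \<noteq> z" "sorted cs" "i \<le> n" "j \<le> n"
  shows "(\<Sum>k\<le>n. \<Sum>l\<le>n. Rw z x i j k l * x ^ (\<Sum>t<r. h (cs ! t) + of_bool (cs ! t < l))) =
    (x - x ^ r * z) / (x - z) * x ^ (\<Sum>t<r. h (cs ! t))
    + (x * z - 1) / (x - z) *
        (\<Sum>s<r. x ^ (s + (\<Sum>t\<in>{..<r} - {s}. h (cs ! t)) + (h (cs ! s) + of_bool (cs ! s < i))))
    + (1 - z) / (x - z) *
        (\<Sum>s<r. x ^ (s + (\<Sum>t\<in>{..<r} - {s}. h (cs ! t)) + (h (cs ! s) + of_bool (cs ! s < i) + of_bool (cs ! s < j))))"
proof -
  define T where "T l = length (takeWhile (\<lambda>c. c < l) cs)" for l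
  define H where "H = (\<Sum>t<r. h (cs ! t))"
  have below: "cs ! t < l \<longleftrightarrow> t < T l" if "t < r" for t l
    using sorted_nth_less_iff[OF assms(3)] that unfolding T_def r_def by simp
  have T: "mono T" "T l \<le> r" for l
    unfolding T_def r_def mono_def by (auto intro: length_takeWhile_less_mono length_takeWhile_le)
  have lhs: "x ^ (\<Sum>t<r. h (cs ! t) + of_bool (cs ! t < l)) = x ^ H * x ^ T l" for l
    unfolding H_def T_def r_def sum.distrib sum_of_bool_sorted_nth_less[OF assms(3)] by (rule power_add)
  have exponents:
    "s + (\<Sum>t\<in>{..<r} - {s}. h (cs ! t)) + (h (cs ! s) + of_bool (cs ! s < i)) = H + (s + of_bool (s < T i))"
    "s + (\<Sum>t\<in>{..<r} - {s}. h (cs ! t)) + (h (cs ! s) + of_bool (cs ! s < i) + of_bool (cs ! s < j)) =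
       H + (s + of_bool (s < T i) + of_bool (s < T j))"
    if "s < r" for s
    using sum.remove[of "{..<r}" s "\<lambda>t. h (cs ! t)"] below[OF that] that unfolding H_def by simp_all
  have sw: "(\<Sum>s<r. x ^ (s + (\<Sum>t\<in>{..<r} - {s}. h (cs ! t)) + (h (cs ! s) + of_bool (cs ! s < i)))) =
      x ^ H * (\<Sum>s<r. x ^ (s + of_bool (s < T i)))"
    unfolding sum_distrib_left by (intro sum.cong refl) (simp only: lessThan_iff exponents power_add)
  have nw: "(\<Sum>s<r. x ^ (s + (\<Sum>t\<in>{..<r} - {s}. h (cs ! t)) + (h (cs ! s) + of_bool (cs ! s < i) + of_bool (cs ! s < j)))) =
      x ^ H * (\<Sum>s<r. x ^ (s + of_bool (s < T i) + of_bool (s < T j)))"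
    unfolding sum_distrib_left by (intro sum.cong refl) (simp only: lessThan_iff exponents power_add)
  have "(\<Sum>k\<le>n. \<Sum>l\<le>n. Rw z x i j k l * x ^ (\<Sum>t<r. h (cs ! t) + of_bool (cs ! t < l))) =
      x ^ H * (\<Sum>k\<le>n. \<Sum>l\<le>n. Rw z x i j k l * x ^ T l)"
    by (simp add: lhs sum_distrib_left mult_ac)
  also have "\<dots> = x ^ H * ((x - x ^ r * z) / (x - z)
      + (x * z - 1) / (x - z) * (\<Sum>t<r. x ^ (t + of_bool (t < T i)))
      + (1 - z) / (x - z) * (\<Sum>t<r. x ^ (t + of_bool (t < T i) + of_bool (t < T j))))"
    by (simp only: sum_Rw_power_mono[OF assms(2) T(1) T(2) T(2) assms(4,5)])
  finally show ?thesis
    unfolding sw nw H_def[symmetric] by (simp add: algebra_simps)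
qed

section \<open>The domain around the vertex v\<close>

locale vertex_in_skew_domain =
  fixes Q P :: "(int \<times> int) list" and a b :: int
  assumes path_le: "path_le Q P" and vertex_in: "(a, b) \<in> skew_domain Q P"
begin

definition ne_vertices :: "(int \<times> int) set" where
  "ne_vertices = {y \<in> skew_domain Q P. a \<le> fst y \<and> b \<le> snd y}"

lemma Q_path: "up_left_path Q" and P_path: "up_left_path P"
  and hd_Q_eq: "hd Q = hd P" and last_Q_eq: "last Q = last P"
  using path_le unfolding path_le_def by auto

lemma Q_nonempty: "Q \<noteq> []"
  using Q_path unfolding up_left_path_def by simp

lemma Q_point_below_left:
  obtains j0 where "j0 < length Q" "fst (Q ! j0) \<le> a - 1" "snd (Q ! j0) \<le> b - 1"
  using vertex_in unfolding skew_domain_def by (auto simp: in_set_conv_nth)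

lemma skew_domain_bounds:
  assumes "y \<in> skew_domain Q P"
  shows "fst y \<le> fst (Q ! 0)" "snd y \<le> snd (Q ! (length Q - 1))"
proof -
  obtain p where p: "p \<in> set P" "fst y \<le> fst p" "snd y \<le> snd p"
    using assms unfolding skew_domain_def by auto
  then show "fst y \<le> fst (Q ! 0)" "snd y \<le> snd (Q ! (length Q - 1))"
    using up_left_path_bounds[OF P_path p(1)] hd_Q_eq last_Q_eq Q_nonempty
    by (auto simp: hd_conv_nth last_conv_nth)
qed

lemma Q_outside_ne_quadrant:
  assumes "i < length Q"
  shows "\<not> (a \<le> fst (Q ! i) \<and> b \<le> snd (Q ! i))"
proof
  assume i: "a \<le> fst (Q ! i) \<and> b \<le> snd (Q ! i)"
  obtain j0 where j0: "j0 < length Q" "fst (Q ! j0) \<le> a - 1" "snd (Q ! j0) \<le> b - 1"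
    using Q_point_below_left .
  have "i < j0"
    using up_left_path_fst_less_imp_less[OF Q_path assms j0(1)] i j0 by simp
  then have "snd (Q ! i) \<le> snd (Q ! j0)"
    using up_left_path_nth_mono[OF Q_path, of i j0] j0 by simp
  then show False
    using i j0 by simp
qed

lemma ne_vertices_iff:
  "y \<in> ne_vertices \<longleftrightarrow> a \<le> fst y \<and> b \<le> snd y \<and> (\<exists>p\<in>set P. fst y \<le> fst p \<and> snd y \<le> snd p)"
proof -
  obtain p where "p \<in> set Q" "fst p \<le> a - 1" "snd p \<le> b - 1"
    using vertex_in unfolding skew_domain_def by auto
  then show ?thesis
    unfolding ne_vertices_def skew_domain_def by (cases y) force
qed

lemma finite_ne_vertices: "finite ne_vertices"
  unfolding ne_vertices_def using finite_skew_domain by auto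

lemma vertex_in_ne_vertices: "(a, b) \<in> ne_vertices"
  unfolding ne_vertices_def using vertex_in by auto

lemma skew_domain_split:
  "skew_domain Q P = sw_domain Q P (a, b) \<union> ne_vertices" "sw_domain Q P (a, b) \<inter> ne_vertices = {}"
  unfolding sw_domain_def ne_vertices_def by auto

lemma adj_edges_sw_disjoint: "adj_edges (sw_domain Q P (a, b)) \<inter> out_edges ne_vertices = {}"
  unfolding adj_edges_def out_edges_def top_edge_def right_edge_def sw_domain_def ne_vertices_def by auto

lemma qedge_notin_out_edges:
  assumes "Suc k < length Q"
  shows "qedge Q k \<notin> out_edges ne_vertices"
proof
  assume "qedge Q k \<in> out_edges ne_vertices"
  then obtain y where y: "y \<in> ne_vertices" "qedge Q k = top_edge y \<or> qedge Q k = right_edge y"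
    unfolding out_edges_def by auto
  have "a \<le> fst y" "b \<le> snd y"
    using y(1) unfolding ne_vertices_def by auto
  moreover have "Q ! k = y \<or> Q ! Suc k = y"
    using up_left_path_step[OF Q_path assms] y(2)
    by (auto simp: qedge_def cross_edge_def top_edge_def right_edge_def prod_eq_iff)
  ultimately show False
    using Q_outside_ne_quadrant[of k] Q_outside_ne_quadrant[of "Suc k"] assms by auto
qed

lemma boundary_edges_disjoint: "boundary_edges Q \<inter> out_edges ne_vertices = {}"
  unfolding boundary_edges_def using qedge_notin_out_edges by auto

lemma bottom_edge_on_Q:
  assumes "y \<in> ne_vertices" "snd y = b" "(fst y, b - 1) \<notin> skew_domain Q P"
  shows "Ve y \<in> boundary_edges Q"
proof -
  obtain p where p: "p \<in> set P" "fst y \<le> fst p" "b \<le> snd p"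
    using assms(1,2) ne_vertices_iff by auto
  obtain j0 where j0: "j0 < length Q" "fst (Q ! j0) \<le> a - 1" "snd (Q ! j0) \<le> b - 1"
    using Q_point_below_left .
  have "a \<le> fst y" "fst y \<le> fst (Q ! 0)"
    using assms(1) skew_domain_bounds(1)[of y] unfolding ne_vertices_def by auto
  then obtain m where m: "Suc m \<le> j0" "fst (Q ! m) = fst y" "Q ! Suc m = (fst y - 1, snd (Q ! m))"
    using up_left_path_crosses_column[OF Q_path j0(1), of "fst y"] j0 by auto
  have "snd (Q ! Suc m) \<le> snd (Q ! j0)"
    using up_left_path_nth_mono[OF Q_path m(1) j0(1)] by simp
  then have below: "snd (Q ! m) \<le> b - 1"
    using m j0 by simp
  have "\<not> snd (Q ! m) \<le> b - 2"
  proof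
    assume "snd (Q ! m) \<le> b - 2"
    moreover have "Q ! Suc m \<in> set Q"
      using m j0 by (intro nth_mem) simp
    ultimately have "\<exists>p\<in>set Q. fst p \<le> fst y - 1 \<and> snd p \<le> b - 1 - 1"
      using m(3) by (intro bexI[of _ "Q ! Suc m"]) auto
    moreover have "\<exists>p\<in>set P. fst y \<le> fst p \<and> b - 1 \<le> snd p"
      using p by auto
    ultimately have "(fst y, b - 1) \<in> skew_domain Q P"
      unfolding skew_domain_def by blast
    then show False
      using assms(3) by simp
  qed
  then have "qedge Q m = Ve y"
    unfolding qedge_def cross_edge_def using below m assms(2) by (simp add: prod_eq_iff)
  moreover have "Suc m < length Q"
    using m j0 by simp
  ultimately show ?thesis
    unfolding boundary_edges_def by (intro CollectI exI[of _ m]) simp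
qed

lemma left_edge_on_Q:
  assumes "y \<in> ne_vertices" "fst y = a" "(a - 1, snd y) \<notin> skew_domain Q P"
  shows "He y \<in> boundary_edges Q"
proof -
  obtain p where p: "p \<in> set P" "a \<le> fst p" "snd y \<le> snd p" "b \<le> snd y"
    using assms(1,2) ne_vertices_iff by auto
  obtain j0 where j0: "j0 < length Q" "fst (Q ! j0) \<le> a - 1" "snd (Q ! j0) \<le> b - 1"
    using Q_point_below_left .
  define jl where "jl = length Q - 1"
  have jl: "jl < length Q"
    unfolding jl_def using Q_nonempty by simp
  have "snd y \<le> snd (Q ! jl)"
    using skew_domain_bounds(2)[of y] assms(1) unfolding ne_vertices_def jl_def by auto
  moreover have "snd (Q ! 0) < snd y"
    using up_left_path_nth_mono[OF Q_path, of 0 j0] j0 p by simp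
  ultimately obtain m where m: "Suc m \<le> jl" "snd (Q ! m) = snd y - 1" "Q ! Suc m = (fst (Q ! m), snd y)"
    using up_left_path_crosses_row[OF Q_path jl, of "snd y"] by auto
  have "j0 < Suc m"
    using up_left_path_snd_less_imp_less[OF Q_path j0(1), of "Suc m"] m jl j0 p by simp
  then have "fst (Q ! m) \<le> fst (Q ! j0)"
    using up_left_path_nth_mono[OF Q_path, of j0 m] m jl by simp
  then have left: "fst (Q ! m) \<le> a - 1"
    using j0 by simp
  have "\<not> fst (Q ! m) \<le> a - 2"
  proof
    assume "fst (Q ! m) \<le> a - 2"
    moreover have "Q ! m \<in> set Q"
      using m jl by (intro nth_mem) simp
    ultimately have "\<exists>p\<in>set Q. fst p \<le> a - 1 - 1 \<and> snd p \<le> snd y - 1"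
      using m(2) by (intro bexI[of _ "Q ! m"]) auto
    moreover have "\<exists>p\<in>set P. a - 1 \<le> fst p \<and> snd y \<le> snd p"
      using p by (intro bexI[of _ p]) auto
    ultimately have "(a - 1, snd y) \<in> skew_domain Q P"
      unfolding skew_domain_def by blast
    then show False
      using assms(3) by simp
  qed
  then have "qedge Q m = He y"
    unfolding qedge_def cross_edge_def using left m assms(2) by (simp add: prod_eq_iff)
  moreover have "Suc m < length Q"
    using m jl by simp
  ultimately show ?thesis
    unfolding boundary_edges_def by (intro CollectI exI[of _ m]) simp
qed

lemma bottom_edge_ne_vertex:
  assumes "y \<in> ne_vertices"
  shows "Ve y \<in> out_edges ne_vertices \<union> adj_edges (sw_domain Q P (a, b)) \<union> boundary_edges Q"
proof -
  obtain p where p: "p \<in> set P" "fst y \<le> fst p" "snd y \<le> snd p" "a \<le> fst y" "b \<le> snd y"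
    using assms ne_vertices_iff by auto
  consider "b < snd y" | "snd y = b" "(fst y, b - 1) \<in> skew_domain Q P" | "snd y = b" "(fst y, b - 1) \<notin> skew_domain Q P"
    using p by fastforce
  then show ?thesis
  proof cases
    case 1
    then have "(fst y, snd y - 1) \<in> ne_vertices"
      unfolding ne_vertices_iff using p by (auto intro!: bexI[of _ p])
    moreover have "Ve y = top_edge (fst y, snd y - 1)"
      by (simp add: top_edge_def)
    ultimately show ?thesis
      unfolding out_edges_def by blast
  next
    case 2
    then have "(fst y, b - 1) \<in> sw_domain Q P (a, b)"
      unfolding sw_domain_def by auto
    then have "Ve y \<in> adj_edges (sw_domain Q P (a, b))"
      unfolding adj_edges_def by (rule UN_I[where a = "(fst y, b - 1)"]) (use 2 in \<open>auto simp: prod_eq_iff\<close>)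
    then show ?thesis
      by simp
  next
    case 3
    then show ?thesis
      using bottom_edge_on_Q[OF assms] by simp
  qed
qed

lemma left_edge_ne_vertex:
  assumes "y \<in> ne_vertices"
  shows "He y \<in> out_edges ne_vertices \<union> adj_edges (sw_domain Q P (a, b)) \<union> boundary_edges Q"
proof -
  obtain p where p: "p \<in> set P" "fst y \<le> fst p" "snd y \<le> snd p" "a \<le> fst y" "b \<le> snd y"
    using assms ne_vertices_iff by auto
  consider "a < fst y" | "fst y = a" "(a - 1, snd y) \<in> skew_domain Q P" | "fst y = a" "(a - 1, snd y) \<notin> skew_domain Q P"
    using p by fastforce
  then show ?thesis
  proof cases
    case 1
    then have "(fst y - 1, snd y) \<in> ne_vertices"
      unfolding ne_vertices_iff using p by (auto intro!: bexI[of _ p])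
    moreover have "He y = right_edge (fst y - 1, snd y)"
      by (simp add: right_edge_def)
    ultimately show ?thesis
      unfolding out_edges_def by blast
  next
    case 2
    then have "(a - 1, snd y) \<in> sw_domain Q P (a, b)"
      unfolding sw_domain_def by auto
    then have "He y \<in> adj_edges (sw_domain Q P (a, b))"
      unfolding adj_edges_def by (rule UN_I[where a = "(a - 1, snd y)"]) (use 2 in \<open>auto simp: prod_eq_iff\<close>)
    then show ?thesis
      by simp
  next
    case 3
    then show ?thesis
      using left_edge_on_Q[OF assms] by simp
  qed
qed

lemma dom_edges_subset:
  "dom_edges Q P \<subseteq> out_edges ne_vertices \<union> adj_edges (sw_domain Q P (a, b)) \<union> boundary_edges Q"
proof
  fix e
  assume "e \<in> dom_edges Q P"
  then consider "e \<in> adj_edges (sw_domain Q P (a, b))" | "e \<in> adj_edges ne_vertices" | "e \<in> boundary_edges Q"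
    unfolding dom_edges_def skew_domain_split(1) adj_edges_def by blast
  then show "e \<in> out_edges ne_vertices \<union> adj_edges (sw_domain Q P (a, b)) \<union> boundary_edges Q"
  proof cases
    case 2
    then obtain y where y: "y \<in> ne_vertices" "e \<in> {Ve y, He y, Ve (fst y, snd y + 1), He (fst y + 1, snd y)}"
      unfolding adj_edges_def by auto
    then show ?thesis
      using bottom_edge_ne_vertex[OF y(1)] left_edge_ne_vertex[OF y(1)]
      unfolding out_edges_def top_edge_def right_edge_def by auto
  qed auto
qed

lemma out_edges_subset_dom_edges: "out_edges ne_vertices \<subseteq> dom_edges Q P"
  unfolding out_edges_def dom_edges_def adj_edges_def top_edge_def right_edge_def skew_domain_split(1)
  by force

lemma conditioned_configs_eq:
  assumes \<sigma>0: "\<sigma>0 \<in> configs n Q P col"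
  shows "{\<sigma> \<in> configs n Q P col. agree_sw Q P (a, b) \<sigma> \<sigma>0} = recolorings \<sigma>0 n (out_edges ne_vertices)"
proof (intro set_eqI iffI)
  fix \<sigma>
  assume \<sigma>: "\<sigma> \<in> {\<sigma> \<in> configs n Q P col. agree_sw Q P (a, b) \<sigma> \<sigma>0}"
  have "\<sigma> e = \<sigma>0 e" if "e \<notin> out_edges ne_vertices" for e
  proof (cases "e \<in> dom_edges Q P")
    case True
    then show ?thesis
      using \<sigma> dom_edges_subset that unfolding agree_sw_def by auto
  next
    case False
    then show ?thesis
      using \<sigma> \<sigma>0 unfolding configs_def by auto
  qed
  then show "\<sigma> \<in> recolorings \<sigma>0 n (out_edges ne_vertices)"
    using \<sigma> unfolding recolorings_def configs_def by auto
next
  fix \<sigma>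
  assume \<sigma>: "\<sigma> \<in> recolorings \<sigma>0 n (out_edges ne_vertices)"
  then have off: "\<sigma> e = \<sigma>0 e" if "e \<notin> out_edges ne_vertices" for e
    using that unfolding recolorings_def by auto
  have "\<sigma> \<in> configs n Q P col"
    unfolding configs_def
  proof (intro CollectI conjI allI impI)
    fix e
    show "e \<notin> dom_edges Q P \<Longrightarrow> \<sigma> e = 0"
      using off[of e] out_edges_subset_dom_edges \<sigma>0 unfolding configs_def by auto
    show "\<sigma> e \<le> n"
      using recolorings_le[OF _ \<sigma>] \<sigma>0 unfolding configs_def by auto
  next
    fix k
    assume "Suc k < length Q"
    then show "\<sigma> (qedge Q k) = col ! k"
      using off qedge_notin_out_edges \<sigma>0 unfolding configs_def by auto
  qed
  moreover have "agree_sw Q P (a, b) \<sigma> \<sigma>0"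
    unfolding agree_sw_def using off adj_edges_sw_disjoint boundary_edges_disjoint by auto
  ultimately show "\<sigma> \<in> {\<sigma> \<in> configs n Q P col. agree_sw Q P (a, b) \<sigma> \<sigma>0}"
    by simp
qed

lemma Q_leaves_column_a:
  "\<exists>m. Suc m < length Q \<and> fst (Q ! m) = a \<and> Q ! Suc m = (a - 1, snd (Q ! m)) \<and>
     snd (Q ! m) \<le> b - 1 \<and> (\<forall>i\<le>m. a \<le> fst (Q ! i))"
proof -
  obtain j0 where j0: "j0 < length Q" "fst (Q ! j0) \<le> a - 1" "snd (Q ! j0) \<le> b - 1"
    using Q_point_below_left .
  have "a \<le> fst (Q ! 0)"
    using skew_domain_bounds(1)[OF vertex_in] by simp
  then obtain m where m: "Suc m \<le> j0" "fst (Q ! m) = a" "Q ! Suc m = (a - 1, snd (Q ! m))"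
    using up_left_path_crosses_column[OF Q_path j0(1), of a] j0 by auto
  have "snd (Q ! Suc m) \<le> snd (Q ! j0)"
    using up_left_path_nth_mono[OF Q_path m(1) j0(1)] by simp
  moreover have "\<forall>i\<le>m. a \<le> fst (Q ! i)"
    using up_left_path_nth_mono[OF Q_path, of _ m] m j0 by force
  ultimately show ?thesis
    using m j0 by (intro exI[of _ m]) auto
qed

definition exit_a :: nat where
  "exit_a = (SOME m. Suc m < length Q \<and> fst (Q ! m) = a \<and> Q ! Suc m = (a - 1, snd (Q ! m)) \<and>
     snd (Q ! m) \<le> b - 1 \<and> (\<forall>i\<le>m. a \<le> fst (Q ! i)))"

lemma exit_a: "Suc exit_a < length Q" "fst (Q ! exit_a) = a" "Q ! Suc exit_a = (a - 1, snd (Q ! exit_a))"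
   "snd (Q ! exit_a) \<le> b - 1" "\<forall>i\<le>exit_a. a \<le> fst (Q ! i)"
  using someI_ex[OF Q_leaves_column_a] unfolding exit_a_def[symmetric] by auto

definition entry_a :: nat where
  "entry_a = (LEAST k. k < length Q \<and> fst (Q ! k) = a)"

lemma entry_a: "entry_a \<le> exit_a" "fst (Q ! entry_a) = a" "entry_a < length Q"
proof -
  have exit: "exit_a < length Q \<and> fst (Q ! exit_a) = a"
    using exit_a by simp
  then show "entry_a \<le> exit_a"
    unfolding entry_a_def by (rule Least_le)
  show "fst (Q ! entry_a) = a" "entry_a < length Q"
    using LeastI[of "\<lambda>k. k < length Q \<and> fst (Q ! k) = a", OF exit] unfolding entry_a_def by auto
qed

lemma entry_a_minus_1: "(LEAST k. k < length Q \<and> fst (Q ! k) = a - 1) = Suc exit_a"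
proof (rule Least_equality)
  fix k
  assume k: "k < length Q \<and> fst (Q ! k) = a - 1"
  show "Suc exit_a \<le> k"
  proof (rule ccontr)
    assume "\<not> Suc exit_a \<le> k"
    then have "a \<le> fst (Q ! k)"
      using exit_a(5) by simp
    then show False
      using k by simp
  qed
qed (use exit_a in simp)

lemma height_column_a: "height Q col \<sigma> c (a, y) = height_from Q col \<sigma> c entry_a a y"
  unfolding height_eq_height_from entry_a_def by simp

lemma height_column_a_minus_1: "height Q col \<sigma> c (a - 1, y) = height_from Q col \<sigma> c (Suc exit_a) (a - 1) y"
  unfolding height_eq_height_from fst_conv snd_conv entry_a_minus_1 ..

lemma height_NE_step:
  "height Q col \<sigma> c (a, b) = height Q col \<sigma> c (a, b - 1) + of_bool (c < \<sigma> (He (a + 1, b)))"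
proof -
  have "snd (Q ! entry_a) \<le> snd (Q ! exit_a)"
    using up_left_path_nth_mono[OF Q_path entry_a(1)] exit_a(1) by simp
  then have "snd (Q ! entry_a) \<le> b - 1"
    using exit_a(4) by simp
  from height_from_up[OF this, of col \<sigma> c a] show ?thesis
    unfolding height_column_a by simp
qed

lemma height_NW_step:
  "height Q col \<sigma> c (a - 1, b) = height Q col \<sigma> c (a - 1, b - 1) + of_bool (c < \<sigma> (He (a, b)))"
proof -
  have "snd (Q ! Suc exit_a) \<le> b - 1"
    using exit_a by simp
  from height_from_up[OF this, of col \<sigma> c "a - 1"] show ?thesis
    unfolding height_column_a_minus_1 by simp
qed

lemma height_cong_off_out_edges:
  assumes "\<forall>e. e \<notin> out_edges ne_vertices \<longrightarrow> \<sigma> e = \<sigma>' e"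
  shows "height Q col \<sigma> c (a, b - 1) = height Q col \<sigma>' c (a, b - 1)"
    and "height Q col \<sigma> c (a - 1, b - 1) = height Q col \<sigma>' c (a - 1, b - 1)"
proof -
  have "He (a + 1, y' + 1) \<notin> out_edges ne_vertices" if "y' < b - 1" for y'
    using that unfolding out_edges_def ne_vertices_def top_edge_def right_edge_def by auto
  then show "height Q col \<sigma> c (a, b - 1) = height Q col \<sigma>' c (a, b - 1)"
    unfolding height_column_a using assms by (intro height_from_cong) auto
  have "He (a, y' + 1) \<notin> out_edges ne_vertices" for y'
    unfolding out_edges_def ne_vertices_def top_edge_def right_edge_def by auto
  then show "height Q col \<sigma> c (a - 1, b - 1) = height Q col \<sigma>' c (a - 1, b - 1)"
    unfolding height_column_a_minus_1 using assms by (intro height_from_cong) auto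
qed

lemma Q_vertical_in_column_a:
  assumes "\<sigma> \<in> configs n Q P col" "entry_a \<le> i" "i < exit_a"
  shows "Q ! Suc i = (a, snd (Q ! i) + 1) \<and> \<sigma> (He (a + 1, snd (Q ! i) + 1)) = col ! i"
proof -
  have i: "Suc i < length Q"
    using assms(3) exit_a(1) by simp
  have "fst (Q ! i) = a" "fst (Q ! Suc i) = a"
    using up_left_path_nth_mono[OF Q_path, of entry_a i] up_left_path_nth_mono[OF Q_path, of entry_a "Suc i"]
      exit_a(5) entry_a(2) assms(2,3) i by (auto intro: order.antisym)
  then have "Q ! Suc i = (a, snd (Q ! i) + 1)"
    using up_left_path_step[OF Q_path i] by auto
  moreover have "\<sigma> (qedge Q i) = col ! i"
    using assms(1) i unfolding configs_def by auto
  ultimately show ?thesis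
    unfolding qedge_def cross_edge_def using \<open>fst (Q ! i) = a\<close> by simp
qed

lemma height_SW_step:
  assumes \<sigma>: "\<sigma> \<in> configs n Q P col"
    and conservation: "\<forall>y\<in>skew_domain Q P. of_bool (c < \<sigma> (Ve y)) + of_bool (c < \<sigma> (He y)) =
        (of_bool (c < \<sigma> (top_edge y)) + of_bool (c < \<sigma> (right_edge y)) :: nat)"
  shows "height Q col \<sigma> c (a - 1, b - 1) = height Q col \<sigma> c (a, b - 1) + of_bool (c < \<sigma> (Ve (a, b)))"
proof -
  define s where "s = snd (Q ! exit_a)"
  have Q_exit: "Q ! exit_a = (a, s)" "Q ! Suc exit_a = (a - 1, s)"
    using exit_a(2,3) unfolding s_def by (simp_all add: prod_eq_iff)
  have "\<sigma> (Ve (a, s + 1)) = col ! exit_a"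
    using \<sigma> exit_a(1) Q_exit unfolding configs_def qedge_def cross_edge_def by auto
  moreover have "(a, y') \<in> skew_domain Q P" if "s + 1 \<le> y'" "y' \<le> b - 1" for y'
  proof -
    have "\<exists>p\<in>set P. a \<le> fst p \<and> y' \<le> snd p"
      using vertex_in that unfolding skew_domain_def by force
    moreover have "Q ! Suc exit_a \<in> set Q"
      using exit_a(1) by (intro nth_mem) simp
    then have "\<exists>p\<in>set Q. fst p \<le> a - 1 \<and> snd p \<le> y' - 1"
      using Q_exit that by (intro bexI[of _ "Q ! Suc exit_a"]) auto
    ultimately show ?thesis
      unfolding skew_domain_def by blast
  qed
  then have "\<forall>y'. s + 1 \<le> y' \<and> y' \<le> b - 1 \<longrightarrow>
      of_bool (c < \<sigma> (Ve (a, y'))) + of_bool (c < \<sigma> (He (a, y'))) =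
      (of_bool (c < \<sigma> (Ve (a, y' + 1))) + of_bool (c < \<sigma> (He (a + 1, y'))) :: nat)"
    using conservation unfolding top_edge_def right_edge_def by force
  moreover have "s \<le> b - 1"
    using exit_a(4) unfolding s_def by simp
  ultimately have "height_from Q col \<sigma> c (Suc exit_a) (a - 1) (b - 1) =
      height_from Q col \<sigma> c exit_a a (b - 1) + of_bool (c < \<sigma> (Ve (a, b - 1 + 1)))"
    using height_from_Suc_horizontal[OF Q_exit] by blast
  moreover have "height_from Q col \<sigma> c entry_a a (b - 1) = height_from Q col \<sigma> c exit_a a (b - 1)"
    using height_from_vertical_run[OF entry_a(1) exit_a(4)] Q_vertical_in_column_a[OF \<sigma>] by blast
  ultimately show ?thesis
    unfolding height_column_a height_column_a_minus_1 by simp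
qed

end

section \<open>The conditioned model\<close>

locale conditioned_sc6v = vertex_in_skew_domain +
  fixes n :: nat and col :: "nat list" and u w :: "int \<Rightarrow> complex" and q :: real and \<sigma>0 :: config
  assumes spec_ne_q: "\<forall>v\<in>skew_domain Q P. spec u w v \<noteq> of_real q"
    and \<sigma>0_config: "\<sigma>0 \<in> configs n Q P col"
    and partition_nonzero: "(\<Sum>\<sigma>\<in>{\<sigma> \<in> configs n Q P col. agree_sw Q P (a, b) \<sigma> \<sigma>0}. weight q u w Q P \<sigma>) \<noteq> 0"
begin

abbreviation conditioned :: "config set" where
  "conditioned \<equiv> recolorings \<sigma>0 n (out_edges ne_vertices)"

lemma conditioned_eq: "{\<sigma> \<in> configs n Q P col. agree_sw Q P (a, b) \<sigma> \<sigma>0} = conditioned"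
  by (rule conditioned_configs_eq[OF \<sigma>0_config])

lemma \<sigma>0_le: "\<sigma>0 e \<le> n"
  using \<sigma>0_config unfolding configs_def by auto

lemma conditioned_off: "\<sigma> \<in> conditioned \<Longrightarrow> e \<notin> out_edges ne_vertices \<Longrightarrow> \<sigma> e = \<sigma>0 e"
  unfolding recolorings_def by auto

lemma weight_split:
  assumes "\<sigma> \<in> conditioned"
  shows "weight q u w Q P \<sigma> =
    (\<Prod>y\<in>sw_domain Q P (a, b). vertex_weight q u w \<sigma>0 y) * (\<Prod>y\<in>ne_vertices. vertex_weight q u w \<sigma> y)"
proof -
  have "finite (sw_domain Q P (a, b))"
    using finite_skew_domain skew_domain_split(1) by (metis finite_Un)
  then have "weight q u w Q P \<sigma> =
      (\<Prod>y\<in>sw_domain Q P (a, b). vertex_weight q u w \<sigma> y) * (\<Prod>y\<in>ne_vertices. vertex_weight q u w \<sigma> y)"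
    unfolding weight_eq_prod_vertex_weight skew_domain_split(1)
    using finite_ne_vertices skew_domain_split(2) by (rule prod.union_disjoint)
  moreover have "vertex_weight q u w \<sigma> y = vertex_weight q u w \<sigma>0 y" if "y \<in> sw_domain Q P (a, b)" for y
  proof -
    have "Ve y \<in> adj_edges (sw_domain Q P (a, b))" "He y \<in> adj_edges (sw_domain Q P (a, b))"
      "top_edge y \<in> adj_edges (sw_domain Q P (a, b))" "right_edge y \<in> adj_edges (sw_domain Q P (a, b))"
      using that unfolding adj_edges_def top_edge_def right_edge_def by (auto intro!: UN_I[where a = y])
    moreover have "\<sigma> e = \<sigma>0 e" if "e \<in> adj_edges (sw_domain Q P (a, b))" for e
      using conditioned_off[OF assms] adj_edges_sw_disjoint that by blast
    ultimately show ?thesis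
      unfolding vertex_weight_def by simp
  qed
  ultimately show ?thesis
    by simp
qed

lemma sum_weight_mult:
  "(\<Sum>\<sigma>\<in>conditioned. weight q u w Q P \<sigma> * g (\<sigma> (top_edge (a, b))) (\<sigma> (right_edge (a, b)))) =
    (\<Prod>y\<in>sw_domain Q P (a, b). vertex_weight q u w \<sigma>0 y) *
    (\<Sum>k\<le>n. \<Sum>l\<le>n. Rw (spec u w (a, b)) (of_real q) (\<sigma>0 (Ve (a, b))) (\<sigma>0 (He (a, b))) k l * g k l)"
proof -
  have "\<forall>x\<in>ne_vertices - {(a, b)}. fst (a, b) + snd (a, b) < fst x + snd x"
    unfolding ne_vertices_def by auto
  moreover have "\<forall>x\<in>ne_vertices. spec u w x \<noteq> of_real q"
    using spec_ne_q unfolding ne_vertices_def by auto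
  ultimately have telescoping:
    "(\<Sum>\<sigma>\<in>conditioned. (\<Prod>x\<in>ne_vertices. vertex_weight q u w \<sigma> x) * g (\<sigma> (top_edge (a, b))) (\<sigma> (right_edge (a, b)))) =
     (\<Sum>k\<le>n. \<Sum>l\<le>n. Rw (spec u w (a, b)) (of_real q) (\<sigma>0 (Ve (a, b))) (\<sigma>0 (He (a, b))) k l * g k l)"
    using sum_recolorings_prod_vertex_weight[OF finite_ne_vertices vertex_in_ne_vertices] \<sigma>0_le by blast
  have "(\<Sum>\<sigma>\<in>conditioned. weight q u w Q P \<sigma> * g (\<sigma> (top_edge (a, b))) (\<sigma> (right_edge (a, b)))) =
      (\<Sum>\<sigma>\<in>conditioned. (\<Prod>y\<in>sw_domain Q P (a, b). vertex_weight q u w \<sigma>0 y) *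
         ((\<Prod>y\<in>ne_vertices. vertex_weight q u w \<sigma> y) * g (\<sigma> (top_edge (a, b))) (\<sigma> (right_edge (a, b)))))"
    by (intro sum.cong refl) (simp add: weight_split mult.assoc)
  also have "\<dots> = (\<Prod>y\<in>sw_domain Q P (a, b). vertex_weight q u w \<sigma>0 y) *
    (\<Sum>k\<le>n. \<Sum>l\<le>n. Rw (spec u w (a, b)) (of_real q) (\<sigma>0 (Ve (a, b))) (\<sigma>0 (He (a, b))) k l * g k l)"
    unfolding sum_distrib_left[symmetric] telescoping ..
  finally show ?thesis .
qed

lemma cond_exp_eq_sum_Rw:
  "cond_exp (weight q u w Q P) {\<sigma> \<in> configs n Q P col. agree_sw Q P (a, b) \<sigma> \<sigma>0}
      (\<lambda>\<sigma>. g (\<sigma> (top_edge (a, b))) (\<sigma> (right_edge (a, b)))) =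
    (\<Sum>k\<le>n. \<Sum>l\<le>n. Rw (spec u w (a, b)) (of_real q) (\<sigma>0 (Ve (a, b))) (\<sigma>0 (He (a, b))) k l * g k l)"
proof -
  have "spec u w (a, b) \<noteq> of_real q"
    using spec_ne_q vertex_in by auto
  then have "(\<Sum>\<sigma>\<in>conditioned. weight q u w Q P \<sigma>) = (\<Prod>y\<in>sw_domain Q P (a, b). vertex_weight q u w \<sigma>0 y)"
    using sum_weight_mult[of "\<lambda>_ _. 1"] sum_Rw[OF \<sigma>0_le \<sigma>0_le] by simp
  then show ?thesis
    using partition_nonzero unfolding cond_exp_def conditioned_eq sum_weight_mult by simp
qed

lemma conservation_in_nonzero_config:
  obtains \<sigma>1 where "\<sigma>1 \<in> conditioned"
    "\<forall>y\<in>skew_domain Q P. of_bool (c < \<sigma>1 (Ve y)) + of_bool (c < \<sigma>1 (He y)) =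
        (of_bool (c < \<sigma>1 (top_edge y)) + of_bool (c < \<sigma>1 (right_edge y)) :: nat)"
proof -
  obtain \<sigma>1 where \<sigma>1: "\<sigma>1 \<in> conditioned" "weight q u w Q P \<sigma>1 \<noteq> 0"
    using partition_nonzero unfolding conditioned_eq by (meson sum.neutral)
  then have "vertex_weight q u w \<sigma>1 y \<noteq> 0" if "y \<in> skew_domain Q P" for y
    using that finite_skew_domain unfolding weight_eq_prod_vertex_weight by (simp add: prod_zero_iff)
  then show ?thesis
    using that[OF \<sigma>1(1)] Rw_nonzero_conserves unfolding vertex_weight_def by blast
qed

lemma height_SW_eq:
  "height Q col \<sigma>0 c (a - 1, b - 1) = height Q col \<sigma>0 c (a, b - 1) + of_bool (c < \<sigma>0 (Ve (a, b)))"
proof -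
  obtain \<sigma>1 where \<sigma>1: "\<sigma>1 \<in> conditioned"
    and conservation: "\<forall>y\<in>skew_domain Q P. of_bool (c < \<sigma>1 (Ve y)) + of_bool (c < \<sigma>1 (He y)) =
        (of_bool (c < \<sigma>1 (top_edge y)) + of_bool (c < \<sigma>1 (right_edge y)) :: nat)"
    using conservation_in_nonzero_config .
  have agree: "\<forall>e. e \<notin> out_edges ne_vertices \<longrightarrow> \<sigma>0 e = \<sigma>1 e"
    using conditioned_off[OF \<sigma>1] by auto
  have "\<sigma>1 \<in> configs n Q P col"
    using \<sigma>1 conditioned_eq by blast
  have "Ve (a, b) \<notin> out_edges ne_vertices"
    unfolding out_edges_def ne_vertices_def top_edge_def right_edge_def by auto
  have "height Q col \<sigma>0 c (a - 1, b - 1) = height Q col \<sigma>1 c (a - 1, b - 1)"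
    by (rule height_cong_off_out_edges(2)[OF agree])
  also have "\<dots> = height Q col \<sigma>1 c (a, b - 1) + of_bool (c < \<sigma>1 (Ve (a, b)))"
    by (rule height_SW_step[OF \<open>\<sigma>1 \<in> configs n Q P col\<close> conservation])
  also have "\<dots> = height Q col \<sigma>0 c (a, b - 1) + of_bool (c < \<sigma>0 (Ve (a, b)))"
    using height_cong_off_out_edges(1)[OF agree] agree \<open>Ve (a, b) \<notin> out_edges ne_vertices\<close> by simp
  finally show ?thesis .
qed

lemma height_NE_eq:
  assumes "\<sigma> \<in> conditioned"
  shows "height Q col \<sigma> c (a, b) = height Q col \<sigma>0 c (a, b - 1) + of_bool (c < \<sigma> (right_edge (a, b)))"
  using height_NE_step[of col \<sigma> c] height_cong_off_out_edges(1)[of \<sigma> \<sigma>0 col c] conditioned_off[OF assms]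
  unfolding right_edge_def by auto

end

theorem proposition5p1:
  fixes n :: nat and Q P :: "(int \<times> int) list" and col :: "nat list"
    and u w :: "int \<Rightarrow> complex" and q :: real and a b :: int
    and cs :: "nat list" and \<sigma>0 :: config
  defines "z \<equiv> spec u w (a, b)"
    and "S \<equiv> {\<sigma> \<in> configs n Q P col. agree_sw Q P (a, b) \<sigma> \<sigma>0}"
    and "hSE \<equiv> \<lambda>c. height Q col \<sigma>0 c (a, b - 1)"
    and "hSW \<equiv> \<lambda>c. height Q col \<sigma>0 c (a - 1, b - 1)"
    and "hNW \<equiv> \<lambda>c. height Q col \<sigma>0 c (a - 1, b)"
    and "r \<equiv> length cs"
  assumes "0 < q" and "q < 1"
    and "path_le Q P"
    and "length col = length Q - 1" and "sorted col" and "\<forall>c\<in>set col. c \<le> n"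
    and "\<forall>v\<in>skew_domain Q P. spec u w v \<noteq> of_real q"
    and "(a, b) \<in> skew_domain Q P"
    and "sorted cs"
    and "\<sigma>0 \<in> configs n Q P col"
    and "(\<Sum>\<sigma>\<in>S. weight q u w Q P \<sigma>) \<noteq> 0"
  shows "cond_exp (weight q u w Q P) S
           (\<lambda>\<sigma>. of_real q ^ (\<Sum>t<r. height Q col \<sigma> (cs ! t) (a, b))) =
         (of_real q - of_real q ^ r * z) / (of_real q - z) * of_real q ^ (\<Sum>t<r. hSE (cs ! t))
       + (of_real q * z - 1) / (of_real q - z) *
           (\<Sum>i<r. of_real q ^ (i + (\<Sum>t\<in>{..<r} - {i}. hSE (cs ! t)) + hSW (cs ! i)))
       + (1 - z) / (of_real q - z) *
           (\<Sum>i<r. of_real q ^ (i + (\<Sum>t\<in>{..<r} - {i}. hSE (cs ! t)) + hNW (cs ! i)))"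
proof -
  interpret conditioned_sc6v Q P a b n col u w q \<sigma>0
    using \<open>path_le Q P\<close> \<open>(a, b) \<in> skew_domain Q P\<close> \<open>\<forall>v\<in>skew_domain Q P. spec u w v \<noteq> of_real q\<close>
      \<open>\<sigma>0 \<in> configs n Q P col\<close> \<open>(\<Sum>\<sigma>\<in>S. weight q u w Q P \<sigma>) \<noteq> 0\<close>
    unfolding S_def by unfold_locales
  let ?g = "\<lambda>l. of_real q ^ (\<Sum>t<r. hSE (cs ! t) + of_bool (cs ! t < l)) :: complex"
  have hSW: "hSW = (\<lambda>c. hSE c + of_bool (c < \<sigma>0 (Ve (a, b))))"
    unfolding hSW_def hSE_def by (simp add: height_SW_eq)
  have hNW: "hNW = (\<lambda>c. hSE c + of_bool (c < \<sigma>0 (Ve (a, b))) + of_bool (c < \<sigma>0 (He (a, b))))"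
    unfolding hNW_def hSE_def by (simp add: height_NW_step height_SW_eq)
  have "of_real q \<noteq> z" "\<sigma>0 (Ve (a, b)) \<le> n" "\<sigma>0 (He (a, b)) \<le> n"
    using spec_ne_q vertex_in \<sigma>0_le unfolding z_def by auto
  have "cond_exp (weight q u w Q P) S (\<lambda>\<sigma>. of_real q ^ (\<Sum>t<r. height Q col \<sigma> (cs ! t) (a, b))) =
      cond_exp (weight q u w Q P) S (\<lambda>\<sigma>. ?g (\<sigma> (right_edge (a, b))))"
    by (rule cond_exp_cong) (simp add: S_def conditioned_eq hSE_def height_NE_eq)
  also have "\<dots> = (\<Sum>k\<le>n. \<Sum>l\<le>n. Rw z (of_real q) (\<sigma>0 (Ve (a, b))) (\<sigma>0 (He (a, b))) k l * ?g l)"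
    unfolding S_def z_def by (rule cond_exp_eq_sum_Rw)
  finally have cond_exp_eq: "cond_exp (weight q u w Q P) S (\<lambda>\<sigma>. of_real q ^ (\<Sum>t<r. height Q col \<sigma> (cs ! t) (a, b))) =
      (\<Sum>k\<le>n. \<Sum>l\<le>n. Rw z (of_real q) (\<sigma>0 (Ve (a, b))) (\<sigma>0 (He (a, b))) k l * ?g l)" .
  show ?thesis
    unfolding cond_exp_eq
    unfolding hSW hNW r_def by (rule sum_Rw_power_heights) fact+
qed

end
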